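(* Let $a>0$, $a_N=a\ln N/N$, and for each $N$ let $P_{N,a_N}$ be the probability on sequences $(n_j)_{j\ge0}$ of nonnegative integers with $\sum_jn_j=N$ given by $P_{N,a_N}((n_j))\propto e^{-a_N\sum_jjn_j}$, with $\langle n_0\rangle_{N,a_N}$ the expectation of $n_0$. Then the critical value is $a_c=1$: for $a<1$, $\frac1N\langle n_0\rangle_{N,a_N}\to0$ (no BEC). For $a>1$ and $\lambda_N=1-m_N/N$ (integers $0\le m_N\le N$) with $0<\lim\lambda_N<1-a^{-1}$, $\lim_{N\to\infty}P_{N,a_N}(n_0/N\ge\lambda_N)=1$; moreover $\lim_{N\to\infty}\frac1N\langle n_0\rangle_{N,a_N}\ge1-\frac1a$.
   Context: This is the canonical ensemble of $N$ noninteracting bosons in a one-dimensional harmonic trap of scaled frequency $\omega\ln N/N$, with $a=\hbar\omega\beta$. *)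

theory Defs
  imports "HOL-Analysis.Analysis"
begin

definition configs :: "nat \<Rightarrow> (nat \<Rightarrow> nat) set" where
  "configs N = {n. finite {j. n j \<noteq> 0} \<and> (\<Sum>j\<in>{j. n j \<noteq> 0}. n j) = N}"

definition energy :: "(nat \<Rightarrow> nat) \<Rightarrow> nat" where
  "energy n = (\<Sum>j\<in>{j. n j \<noteq> 0}. j * n j)"

definition bweight :: "real \<Rightarrow> (nat \<Rightarrow> nat) \<Rightarrow> real" where
  "bweight b n = exp (- b * real (energy n))"

definition partfun :: "nat \<Rightarrow> real \<Rightarrow> real" where
  "partfun N b = infsum (bweight b) (configs N)"

definition cprob :: "nat \<Rightarrow> real \<Rightarrow> ((nat \<Rightarrow> nat) \<Rightarrow> bool) \<Rightarrow> real" where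
  "cprob N b A = infsum (bweight b) {n \<in> configs N. A n} / partfun N b"

definition mean_n0 :: "nat \<Rightarrow> real \<Rightarrow> real" where
  "mean_n0 N b = infsum (\<lambda>n. real (n 0) * bweight b n) (configs N) / partfun N b"

end

theory Submission
  imports Defs "HOL-Real_Asymp.Real_Asymp"
begin

text \<open>Moving every excited particle up one level, and the ground-state particles in excess
  of \<open>N - j\<close> to level 1, is a bijection from the configurations with at most \<open>j\<close> excited
  particles onto those with exactly \<open>j\<close>, and it raises the energy by exactly \<open>j\<close>. Hence, with
  \<open>q = e\<^sup>-\<^sup>b\<close>, the weight \<open>Z\<^sub>j\<close> of at most \<open>j\<close> excited particles satisfies
  \<open>Z\<^sub>j = Z\<^sub>j\<^sub>-\<^sub>1 + q\<^sup>j Z\<^sub>j\<close>, so \<open>Z\<^sub>j = 1 / (q; q)\<^sub>j\<close> and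
  \<open>P(n\<^sub>0 \<ge> N - m)\<close> is the product of \<open>1 - q\<^sup>i\<close> over \<open>m < i \<le> N\<close>.

  For \<open>b = a ln N / N\<close> one has \<open>q\<^sup>i = N\<^sup>-\<^sup>a\<^sup>i\<^sup>/\<^sup>N\<close>. If \<open>a m / N \<rightarrow> a \<mu> > 1\<close>, the
  Weierstrass product inequality bounds the product below by \<open>1 - N\<^sup>1\<^sup>-\<^sup>a\<^sup>m\<^sup>/\<^sup>N \<rightarrow> 1\<close>, and
  \<open>\<langle>n\<^sub>0\<rangle> \<ge> (N - m) P(n\<^sub>0 \<ge> N - m)\<close> bounds the liminf. If \<open>a < 1\<close>, take \<open>N - m \<approx> N\<^sup>e\<close>
  with \<open>a < e < 1\<close>: the product is at most \<open>(1 - N\<^sup>-\<^sup>a)\<^sup>N\<^sup>-\<^sup>m \<le> exp (- N\<^sup>e\<^sup>-\<^sup>a)\<close>, so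
  \<open>\<langle>n\<^sub>0\<rangle> \<le> (N - m) + N P(n\<^sub>0 \<ge> N - m) = o(N)\<close>.\<close>

section \<open>Finitely supported configurations\<close>

lemma support_subset_lessThan:
  fixes n :: "nat \<Rightarrow> nat"
  assumes "\<forall>i\<ge>K. n i = 0"
  shows "{j. n j \<noteq> 0} \<subseteq> {..<K}"
  using assms by (auto simp: not_less[symmetric])

lemma sum_support_eq_sum_lessThan:
  fixes n :: "nat \<Rightarrow> nat"
  assumes "\<forall>i\<ge>K. n i = 0"
  shows "(\<Sum>j\<in>{j. n j \<noteq> 0}. f j * n j) = (\<Sum>j<K. f j * n j)"
  by (rule sum.mono_neutral_left[OF finite_lessThan support_subset_lessThan[OF assms]]) simp

lemma configs_iff_sum_lessThan:
  assumes "\<forall>i\<ge>K. n i = 0"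
  shows "n \<in> configs N \<longleftrightarrow> (\<Sum>j<K. n j) = N"
proof -
  have "finite {j. n j \<noteq> 0}"
    using support_subset_lessThan[OF assms] finite_subset by blast
  moreover have "(\<Sum>j\<in>{j. n j \<noteq> 0}. n j) = (\<Sum>j<K. n j)"
    using sum_support_eq_sum_lessThan[OF assms, of "\<lambda>_. 1"] by simp
  ultimately show ?thesis
    unfolding configs_def by simp
qed

lemma energy_eq_sum_lessThan:
  assumes "\<forall>i\<ge>K. n i = 0"
  shows "energy n = (\<Sum>j<K. j * n j)"
  unfolding energy_def by (rule sum_support_eq_sum_lessThan[OF assms])

lemma configs_eventually_zero:
  assumes "n \<in> configs N"
  obtains K where "\<forall>i\<ge>K. n i = 0"
proof -
  obtain K where "{j. n j \<noteq> 0} \<subseteq> {..<K}"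
    using assms finite_nat_bounded unfolding configs_def by blast
  then show ?thesis
    by (intro that) (auto simp: subset_iff not_less[symmetric])
qed

lemma configs_ground_le:
  assumes "n \<in> configs N"
  shows "n 0 + n 1 \<le> N"
proof -
  obtain K where K: "\<forall>i\<ge>K. n i = 0"
    using assms configs_eventually_zero by blast
  then have "(\<Sum>j<Suc (Suc K). n j) = N"
    using assms configs_iff_sum_lessThan[of "Suc (Suc K)"] by simp
  then show ?thesis
    by (simp add: sum.lessThan_Suc_shift del: sum.lessThan_Suc)
qed

section \<open>Raising the excited particles\<close>

definition excited_le :: "nat \<Rightarrow> nat \<Rightarrow> (nat \<Rightarrow> nat) set" where
  "excited_le N j = {n \<in> configs N. N - j \<le> n 0}"

definition excited_eq :: "nat \<Rightarrow> nat \<Rightarrow> (nat \<Rightarrow> nat) set" where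
  "excited_eq N j = {n \<in> configs N. n 0 = N - j}"

definition raise_excited :: "nat \<Rightarrow> nat \<Rightarrow> (nat \<Rightarrow> nat) \<Rightarrow> nat \<Rightarrow> nat" where
  "raise_excited N j n =
     (\<lambda>i. if i = 0 then N - j else if i = 1 then n 0 - (N - j) else n (i - 1))"

definition merge_ground :: "(nat \<Rightarrow> nat) \<Rightarrow> nat \<Rightarrow> nat" where
  "merge_ground n = (\<lambda>i. if i = 0 then n 0 + n 1 else n (Suc i))"

lemma raise_excited_in_excited_eq:
  assumes n: "n \<in> excited_le N j" and "j \<le> N"
  shows "raise_excited N j n \<in> excited_eq N j"
    and "merge_ground (raise_excited N j n) = n"
    and "energy (raise_excited N j n) = energy n + j"
proof -
  have c: "n \<in> configs N" and ground: "N - j \<le> n 0"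
    using n unfolding excited_le_def by auto
  obtain K where K: "\<forall>i\<ge>K. n i = 0"
    using c configs_eventually_zero by blast
  have n0: "n 0 \<le> N"
    using configs_ground_le[OF c] by simp
  have sum_n: "n 0 + (\<Sum>i<K. n (Suc i)) = N"
    using c K configs_iff_sum_lessThan[of "Suc K"]
    by (simp add: sum.lessThan_Suc_shift del: sum.lessThan_Suc)
  have K2: "\<forall>i\<ge>Suc (Suc K). raise_excited N j n i = 0"
    using K by (simp add: raise_excited_def)
  have "(\<Sum>i<Suc (Suc K). raise_excited N j n i) = n 0 + (\<Sum>i<K. n (Suc i))"
    using ground n0 \<open>j \<le> N\<close>
    by (simp add: sum.lessThan_Suc_shift raise_excited_def del: sum.lessThan_Suc)
  then show "raise_excited N j n \<in> excited_eq N j"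
    using sum_n configs_iff_sum_lessThan[OF K2]
    by (simp add: excited_eq_def raise_excited_def)
  show "merge_ground (raise_excited N j n) = n"
    using ground n0 \<open>j \<le> N\<close> by (auto simp: fun_eq_iff merge_ground_def raise_excited_def)
  have "energy (raise_excited N j n)
      = (n 0 - (N - j)) + (\<Sum>i<K. n (Suc i)) + (\<Sum>i<K. Suc i * n (Suc i))"
    using energy_eq_sum_lessThan[OF K2]
    by (simp add: sum.lessThan_Suc_shift raise_excited_def sum.distrib del: sum.lessThan_Suc)
  also have "\<dots> = j + energy n"
    using energy_eq_sum_lessThan[of "Suc K" n] K sum_n ground \<open>j \<le> N\<close>
    by (simp add: sum.lessThan_Suc_shift del: sum.lessThan_Suc)
  finally show "energy (raise_excited N j n) = energy n + j"
    by simp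
qed

lemma merge_ground_in_excited_le:
  assumes n: "n \<in> excited_eq N j" and "j \<le> N"
  shows "merge_ground n \<in> excited_le N j"
    and "raise_excited N j (merge_ground n) = n"
proof -
  have c: "n \<in> configs N" and ground: "n 0 = N - j"
    using n unfolding excited_eq_def by auto
  obtain K where K: "\<forall>i\<ge>K. n i = 0"
    using c configs_eventually_zero by blast
  have K1: "\<forall>i\<ge>Suc K. merge_ground n i = 0"
    using K by (simp add: merge_ground_def)
  have "(\<Sum>i<Suc K. merge_ground n i) = (\<Sum>i<Suc (Suc K). n i)"
    by (simp add: sum.lessThan_Suc_shift merge_ground_def del: sum.lessThan_Suc)
  also have "\<dots> = N"
    using c K configs_iff_sum_lessThan[of "Suc (Suc K)"] by simp
  finally have "merge_ground n \<in> configs N"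
    using configs_iff_sum_lessThan[OF K1] by blast
  then show "merge_ground n \<in> excited_le N j"
    using ground by (simp add: excited_le_def merge_ground_def)
  show "raise_excited N j (merge_ground n) = n"
    using ground configs_ground_le[OF c] \<open>j \<le> N\<close>
    by (auto simp: fun_eq_iff merge_ground_def raise_excited_def)
qed

lemma bij_betw_raise_excited:
  assumes "j \<le> N"
  shows "bij_betw (raise_excited N j) (excited_le N j) (excited_eq N j)"
  by (rule bij_betw_byWitness[where f' = merge_ground])
     (use raise_excited_in_excited_eq merge_ground_in_excited_le assms in auto)

lemma energy_merge_ground:
  assumes "n \<in> excited_eq N j" "j \<le> N"
  shows "energy (merge_ground n) + j = energy n"
  using raise_excited_in_excited_eq(3)[OF merge_ground_in_excited_le(1)[OF assms] assms(2)]
  by (simp add: merge_ground_in_excited_le(2)[OF assms])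

lemma bweight_raise_excited:
  assumes "n \<in> excited_le N j" "j \<le> N"
  shows "bweight b (raise_excited N j n) = exp (- b * real j) * bweight b n"
  using raise_excited_in_excited_eq(3)[OF assms]
  by (simp add: bweight_def algebra_simps flip: exp_add)

lemma excited_le_0: "excited_le N 0 = {\<lambda>i. if i = 0 then N else 0}"
proof (intro equalityI subsetI)
  fix n
  assume "n \<in> excited_le N 0"
  then have c: "n \<in> configs N" and ground: "N \<le> n 0"
    unfolding excited_le_def by auto
  obtain K where K: "\<forall>i\<ge>K. n i = 0"
    using c configs_eventually_zero by blast
  then have "\<forall>i\<ge>Suc K. n i = 0"
    by simp
  then have "n 0 + (\<Sum>i<K. n (Suc i)) = N"
    using c configs_iff_sum_lessThan[of "Suc K" n N]
    by (simp add: sum.lessThan_Suc_shift del: sum.lessThan_Suc)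
  then have n0: "n 0 = N" and excited: "\<forall>i<K. n (Suc i) = 0"
    using ground by auto
  have "n i = (if i = 0 then N else 0)" for i
  proof (cases i)
    case (Suc i')
    then show ?thesis
      using K excited by (cases "i' < K") auto
  qed (simp add: n0)
  then show "n \<in> {\<lambda>i. if i = 0 then N else 0}"
    by auto
next
  fix n :: "nat \<Rightarrow> nat"
  assume "n \<in> {\<lambda>i. if i = 0 then N else 0}"
  moreover have "(\<lambda>i. if i = 0 then N else 0) \<in> configs N"
    using configs_iff_sum_lessThan[of 1 "\<lambda>i. if i = 0 then N else 0"] by simp
  ultimately show "n \<in> excited_le N 0"
    unfolding excited_le_def by auto
qed

lemma bweight_excited_le_0:
  assumes "n \<in> excited_le N 0"
  shows "bweight b n = 1"
proof -
  have "energy (\<lambda>i. if i = 0 then N else 0) = 0"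
    using energy_eq_sum_lessThan[of 1 "\<lambda>i. if i = 0 then N else 0"] by simp
  then show ?thesis
    using assms by (simp add: excited_le_0 bweight_def)
qed

lemma excited_le_Suc:
  assumes "Suc j \<le> N"
  shows "excited_le N (Suc j) = excited_le N j \<union> excited_eq N (Suc j)"
    and "excited_le N j \<inter> excited_eq N (Suc j) = {}"
  using assms unfolding excited_le_def excited_eq_def by auto

lemma excited_le_self: "excited_le N N = configs N"
  unfolding excited_le_def by auto

section \<open>Partition sums with a bounded number of excited particles\<close>

definition qpochhammer :: "real \<Rightarrow> nat \<Rightarrow> real" where
  "qpochhammer b j = (\<Prod>i = 1..j. 1 - exp (- b * real i))"

lemma qpochhammer_0 [simp]: "qpochhammer b 0 = 1"
  by (simp add: qpochhammer_def)

lemma qpochhammer_Suc: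
  "qpochhammer b (Suc j) = qpochhammer b j * (1 - exp (- b * real (Suc j)))"
  by (simp add: qpochhammer_def)

lemma qpochhammer_pos:
  assumes "b > 0"
  shows "qpochhammer b j > 0"
  unfolding qpochhammer_def using assms by (intro prod_pos) auto

lemma sum_bweight_excited_eq:
  assumes "j \<le> N" "F \<subseteq> excited_eq N j"
  shows "sum (bweight b) F = exp (- b * real j) * sum (bweight b) (merge_ground ` F)"
proof -
  have G: "merge_ground ` F \<subseteq> excited_le N j"
    using assms merge_ground_in_excited_le(1) by blast
  have F: "F = raise_excited N j ` merge_ground ` F"
    using assms merge_ground_in_excited_le(2) by (force simp: image_image)
  have "inj_on (raise_excited N j) (merge_ground ` F)"
    using bij_betw_imp_inj_on[OF bij_betw_raise_excited[OF assms(1)]] G by (rule inj_on_subset)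
  then have "sum (bweight b) F = (\<Sum>n\<in>merge_ground ` F. bweight b (raise_excited N j n))"
    by (subst F) (rule sum.reindex_cong[OF _ refl refl])
  also have "\<dots> = exp (- b * real j) * sum (bweight b) (merge_ground ` F)"
    using G bweight_raise_excited[OF _ assms(1)] by (simp add: sum_distrib_left subset_iff)
  finally show ?thesis .
qed

lemma sum_bweight_excited_le_Suc:
  assumes "Suc k \<le> N" "finite F" "F \<subseteq> excited_le N (Suc k)"
  shows "sum (bweight b) F = sum (bweight b) (F \<inter> excited_le N k)
    + exp (- b * real (Suc k)) * sum (bweight b) (merge_ground ` (F \<inter> excited_eq N (Suc k)))"
proof -
  have "F = (F \<inter> excited_le N k) \<union> (F \<inter> excited_eq N (Suc k))"
    using assms(3) excited_le_Suc(1)[OF assms(1)] by blast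
  then have "sum (bweight b) F
      = sum (bweight b) (F \<inter> excited_le N k) + sum (bweight b) (F \<inter> excited_eq N (Suc k))"
    using sum.union_disjoint[of "F \<inter> excited_le N k" "F \<inter> excited_eq N (Suc k)" "bweight b"]
      excited_le_Suc(2)[OF assms(1)] assms(2) by auto
  then show ?thesis
    using sum_bweight_excited_eq[OF assms(1), of "F \<inter> excited_eq N (Suc k)" b] by simp
qed

lemma inverse_qpochhammer_Suc:
  assumes "b > 0"
  shows "1 / qpochhammer b j + exp (- b * real (Suc j)) / qpochhammer b (Suc j)
    = 1 / qpochhammer b (Suc j)"
proof -
  have "exp (- b * real (Suc j)) < 1"
    using assms by simp
  then show ?thesis
    using qpochhammer_pos[OF assms, of j] by (simp add: qpochhammer_Suc field_simps)
qed

text \<open>Induction on \<open>s\<close>, a strict bound on \<open>energy + j\<close>: both the configurations with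
  fewer excited particles and the merged ones have smaller \<open>energy + j\<close>.\<close>

lemma sum_bweight_excited_le_bound:
  assumes b: "b > 0"
  shows "j \<le> N \<Longrightarrow> finite F \<Longrightarrow> F \<subseteq> excited_le N j \<Longrightarrow> \<forall>n\<in>F. energy n + j < s
    \<Longrightarrow> sum (bweight b) F \<le> 1 / qpochhammer b j"
proof (induction s arbitrary: j F rule: less_induct)
  case (less s)
  consider "F = {}" | "j = 0" | k where "j = Suc k" "0 < s"
  proof (cases "F = {}")
    case False
    with less.prems(4) have "0 < s"
      by auto
    with that(2,3) show ?thesis
      by (cases j) auto
  qed (rule that(1))
  then show ?case
  proof cases
    case 1
    then show ?thesis
      using qpochhammer_pos[OF b, of j] by simp
  next
    case 2
    have "sum (bweight b) F = sum (\<lambda>_. 1) F"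
      using less.prems(3) 2 bweight_excited_le_0 by (intro sum.cong) auto
    moreover have "card F \<le> card (excited_le N 0)"
      using less.prems(3) 2 by (intro card_mono) (auto simp: excited_le_0)
    ultimately show ?thesis
      using 2 by (simp add: excited_le_0)
  next
    case 3
    define G where "G = merge_ground ` (F \<inter> excited_eq N j)"
    have "sum (bweight b) (F \<inter> excited_le N k) \<le> 1 / qpochhammer b k"
      using less.prems 3 by (intro less.IH[of "s - 1"]) auto
    moreover have G: "sum (bweight b) G \<le> 1 / qpochhammer b j"
    proof (rule less.IH[of "s - j"])
      show "G \<subseteq> excited_le N j"
        using merge_ground_in_excited_le(1) less.prems(1) unfolding G_def by blast
      show "\<forall>n\<in>G. energy n + j < s - j"
        using energy_merge_ground less.prems(1,4) unfolding G_def by fastforce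
    qed (use less.prems 3 G_def in auto)
    moreover have "sum (bweight b) F
        = sum (bweight b) (F \<inter> excited_le N k) + exp (- b * real j) * sum (bweight b) G"
      using sum_bweight_excited_le_Suc[of k N F b] less.prems(1-3) 3(1) unfolding G_def by simp
    ultimately have "sum (bweight b) F
        \<le> 1 / qpochhammer b k + exp (- b * real j) * (1 / qpochhammer b j)"
      using mult_left_mono[OF G, of "exp (- b * real j)"] by simp
    then show ?thesis
      using inverse_qpochhammer_Suc[OF b, of k] 3(1) by simp
  qed
qed

lemma summable_on_excited_le:
  assumes "b > 0" "j \<le> N"
  shows "bweight b summable_on excited_le N j"
proof (rule nonneg_bdd_above_summable_on)
  show "bdd_above (sum (bweight b) ` {F. F \<subseteq> excited_le N j \<and> finite F})"
  proof (rule bdd_aboveI)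
    fix x
    assume "x \<in> sum (bweight b) ` {F. F \<subseteq> excited_le N j \<and> finite F}"
    then obtain F where F: "F \<subseteq> excited_le N j" "finite F" "x = sum (bweight b) F"
      by blast
    then have "\<forall>n\<in>F. energy n + j < Max (energy ` F) + j + 1"
      by (simp add: less_Suc_eq_le)
    then show "x \<le> 1 / qpochhammer b j"
      using sum_bweight_excited_le_bound[OF assms F(2,1)] F(3) by blast
  qed
qed (simp add: bweight_def)

lemma summable_on_bweight_configs:
  assumes "b > 0"
  shows "bweight b summable_on configs N"
  using summable_on_excited_le[OF assms order_refl, of N] by (simp add: excited_le_self)

lemma has_sum_excited_le:
  assumes b: "b > 0"
  shows "j \<le> N \<Longrightarrow> (bweight b has_sum 1 / qpochhammer b j) (excited_le N j)"
proof (induction j)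
  case 0
  then show ?case
    using has_sum_finite[of "excited_le N 0" "bweight b"] bweight_excited_le_0[of _ N b]
    by (simp add: excited_le_0)
next
  case (Suc j)
  define q where "q = exp (- b * real (Suc j))"
  define S where "S = infsum (bweight b) (excited_le N (Suc j))"
  have S: "(bweight b has_sum S) (excited_le N (Suc j))"
    unfolding S_def using summable_on_excited_le[OF b Suc.prems] by (rule has_sum_infsum)
  have "((\<lambda>n. bweight b (raise_excited N (Suc j) n)) has_sum q * S) (excited_le N (Suc j))"
    using has_sum_cmult_right[OF S, of q] bweight_raise_excited[OF _ Suc.prems]
    by (subst has_sum_cong) (auto simp: q_def)
  then have "(bweight b has_sum q * S) (excited_eq N (Suc j))"
    using has_sum_reindex_bij_betw[OF bij_betw_raise_excited[OF Suc.prems]] by blast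
  then have "(bweight b has_sum 1 / qpochhammer b j + q * S) (excited_le N (Suc j))"
    using has_sum_Un_disjoint[OF Suc.IH] Suc.prems excited_le_Suc[OF Suc.prems] by simp
  then have "S = 1 / qpochhammer b j + q * S"
    using S has_sum_unique by blast
  also have "1 / qpochhammer b j = (1 - q) / qpochhammer b (Suc j)"
    using inverse_qpochhammer_Suc[OF b, of j] unfolding q_def[symmetric] diff_divide_distrib
    by linarith
  finally have "(1 - q) * S = (1 - q) * (1 / qpochhammer b (Suc j))"
    by (simp add: algebra_simps)
  moreover have "1 - q \<noteq> 0"
    unfolding q_def using b by simp
  ultimately have "S = 1 / qpochhammer b (Suc j)"
    using mult_left_cancel by blast
  then show ?case
    using S by simp
qed

lemma partfun_eq_inverse_qpochhammer:
  assumes "b > 0"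
  shows "partfun N b = 1 / qpochhammer b N"
  unfolding partfun_def using has_sum_excited_le[OF assms, of N N]
  by (simp add: excited_le_self infsumI)

lemma partfun_pos:
  assumes "b > 0"
  shows "partfun N b > 0"
  using partfun_eq_inverse_qpochhammer[OF assms] qpochhammer_pos[OF assms] by simp

lemma cprob_excited_le:
  assumes "b > 0" "m \<le> N"
  shows "cprob N b (\<lambda>n. N - m \<le> n 0) = (\<Prod>i\<in>{m<..N}. 1 - exp (- b * real i))"
proof -
  have split: "{1..N} = {1..m} \<union> {m<..N}"
    using assms(2) by auto
  have "qpochhammer b N = qpochhammer b m * (\<Prod>i\<in>{m<..N}. 1 - exp (- b * real i))"
    unfolding qpochhammer_def split by (rule prod.union_disjoint) auto
  moreover have "cprob N b (\<lambda>n. N - m \<le> n 0) = qpochhammer b N / qpochhammer b m"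
    using infsumI[OF has_sum_excited_le[OF assms]] partfun_eq_inverse_qpochhammer[OF assms(1)]
    unfolding cprob_def excited_le_def by simp
  ultimately show ?thesis
    using qpochhammer_pos[OF assms(1), of m] by simp
qed

lemma cprob_excited_le_ge:
  assumes "b > 0" "m \<le> N"
  shows "1 - real N * exp (- b * real m) \<le> cprob N b (\<lambda>n. N - m \<le> n 0)"
proof -
  have "(\<Sum>i\<in>{m<..N}. exp (- b * real i)) \<le> real (card {m<..N}) * exp (- b * real m)"
    using assms(1) by (intro sum_bounded_above) simp
  also have "\<dots> \<le> real N * exp (- b * real m)"
    by (intro mult_right_mono) auto
  finally have "1 - real N * exp (- b * real m) \<le> 1 - (\<Sum>i\<in>{m<..N}. exp (- b * real i))"
    by linarith
  also have "\<dots> \<le> (\<Prod>i\<in>{m<..N}. 1 - exp (- b * real i))"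
    using assms(1) by (intro Weierstrass_prod_ineq) simp
  finally show ?thesis
    using cprob_excited_le[OF assms] by simp
qed

lemma cprob_excited_le_le:
  assumes "b > 0" "m \<le> N"
  shows "cprob N b (\<lambda>n. N - m \<le> n 0) \<le> (1 - exp (- b * real N)) ^ (N - m)"
proof -
  have "(\<Prod>i\<in>{m<..N}. 1 - exp (- b * real i)) \<le> (\<Prod>i\<in>{m<..N}. 1 - exp (- b * real N))"
    using assms(1) by (intro prod_mono) auto
  then show ?thesis
    using cprob_excited_le[OF assms] by simp
qed

lemma cprob_nonneg: "0 \<le> cprob N b A"
  unfolding cprob_def partfun_def
  by (intro divide_nonneg_nonneg infsum_nonneg) (simp_all add: bweight_def)

lemma mean_n0_nonneg: "0 \<le> mean_n0 N b"
  unfolding mean_n0_def partfun_def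
  by (intro divide_nonneg_nonneg infsum_nonneg) (simp_all add: bweight_def)

lemma cprob_le_1:
  assumes "b > 0"
  shows "cprob N b A \<le> 1"
proof -
  have "infsum (bweight b) {n \<in> configs N. A n} \<le> partfun N b"
    unfolding partfun_def using summable_on_bweight_configs[OF assms]
    by (intro infsum_mono2) (auto simp: bweight_def intro: summable_on_subset)
  then show ?thesis
    using partfun_pos[OF assms] by (simp add: cprob_def)
qed

lemma summable_on_n0_bweight:
  assumes "b > 0"
  shows "(\<lambda>n. real (n 0) * bweight b n) summable_on configs N"
proof (rule summable_on_comparison_test)
  show "(\<lambda>n. real N * bweight b n) summable_on configs N"
    using summable_on_bweight_configs[OF assms] by (rule summable_on_cmult_right)
  show "real (n 0) * bweight b n \<le> real N * bweight b n" if "n \<in> configs N" for n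
    using configs_ground_le[OF that] by (intro mult_right_mono) (auto simp: bweight_def)
qed (simp add: bweight_def)

lemma mean_n0_ge:
  assumes b: "b > 0" and "m \<le> N"
  shows "real (N - m) * cprob N b (\<lambda>n. N - m \<le> n 0) \<le> mean_n0 N b"
proof -
  have "real (N - m) * infsum (bweight b) (excited_le N m)
      = infsum (\<lambda>n. real (N - m) * bweight b n) (excited_le N m)"
    using summable_on_excited_le[OF assms] by (simp add: infsum_cmult_right)
  also have "\<dots> \<le> infsum (\<lambda>n. real (n 0) * bweight b n) (configs N)"
  proof (rule infsum_mono_neutral)
    show "(\<lambda>n. real (N - m) * bweight b n) summable_on excited_le N m"
      using summable_on_excited_le[OF assms] by (rule summable_on_cmult_right)
    show "(\<lambda>n. real (n 0) * bweight b n) summable_on configs N"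
      by (rule summable_on_n0_bweight[OF b])
  qed (auto simp: excited_le_def bweight_def intro!: mult_right_mono)
  finally show ?thesis
    using partfun_pos[OF b, of N] unfolding cprob_def mean_n0_def excited_le_def
    by (simp add: divide_right_mono)
qed

text \<open>Pointwise \<open>n 0 \<le> (N - m) + m \<cdot> [N - m \<le> n 0]\<close> on \<open>configs N\<close>.\<close>

lemma mean_n0_le:
  assumes b: "b > 0" and "m \<le> N"
  shows "mean_n0 N b \<le> real (N - m) + real m * cprob N b (\<lambda>n. N - m \<le> n 0)"
proof -
  define T where "T = excited_le N m"
  define S where "S = infsum (bweight b) T"
  have "((\<lambda>n. real m * bweight b n) has_sum real m * S) T"
    unfolding S_def T_def using summable_on_excited_le[OF assms]
    by (intro has_sum_cmult_right has_sum_infsum)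
  then have "((\<lambda>n. if n \<in> T then real m * bweight b n else 0) has_sum real m * S) (configs N)"
    by (subst has_sum_cong_neutral[where T = T]) (auto simp: T_def excited_le_def)
  moreover have "((\<lambda>n. real (N - m) * bweight b n) has_sum real (N - m) * partfun N b) (configs N)"
    unfolding partfun_def using summable_on_bweight_configs[OF b]
    by (intro has_sum_cmult_right has_sum_infsum)
  ultimately have "((\<lambda>n. real (N - m) * bweight b n + (if n \<in> T then real m * bweight b n else 0))
      has_sum real (N - m) * partfun N b + real m * S) (configs N)"
    by (intro has_sum_add)
  moreover have "real (n 0) * bweight b n
      \<le> real (N - m) * bweight b n + (if n \<in> T then real m * bweight b n else 0)"
    if "n \<in> configs N" for n
  proof -
    have "real (n 0) \<le> real (N - m) + (if n \<in> T then real m else 0)"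
      using configs_ground_le[OF that] that assms(2) by (auto simp: T_def excited_le_def)
    then have "real (n 0) * bweight b n
        \<le> (real (N - m) + (if n \<in> T then real m else 0)) * bweight b n"
      by (rule mult_right_mono) (simp add: bweight_def)
    then show ?thesis
      by (cases "n \<in> T") (simp_all add: distrib_right)
  qed
  ultimately have "infsum (\<lambda>n. real (n 0) * bweight b n) (configs N)
      \<le> real (N - m) * partfun N b + real m * S"
    using summable_on_n0_bweight[OF b] by (intro has_sum_mono[OF has_sum_infsum]) auto
  then show ?thesis
    using partfun_pos[OF b, of N] unfolding cprob_def mean_n0_def
    by (simp add: S_def T_def excited_le_def field_simps)
qed

section \<open>Asymptotics at inverse temperature \<open>a ln N / N\<close>\<close>

lemma exp_scaled_log:
  assumes "N > 0"
  shows "exp (- (a * ln (real N) / real N) * x) = real N powr (- (a * x / real N))"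
  using assms by (simp add: powr_def)

lemma tendsto_cprob_excited_le:
  assumes a: "a > 0" and m: "\<forall>N. m N \<le> N"
    and lim: "(\<lambda>N. real (m N) / real N) \<longlonglongrightarrow> \<mu>" and a\<mu>: "a * \<mu> > 1"
  shows "(\<lambda>N. cprob N (a * ln (real N) / real N) (\<lambda>n. N - m N \<le> n 0)) \<longlonglongrightarrow> 1"
proof -
  define c where "c = (a * \<mu> + 1) / 2"
  have c: "1 < c" "c < a * \<mu>"
    using a\<mu> unfolding c_def by (auto simp: mult.commute)
  have "eventually (\<lambda>N. c < a * (real (m N) / real N)) sequentially"
    using tendsto_mult_left[OF lim, of a] c(2) by (rule order_tendstoD(1))
  then have lower: "eventually (\<lambda>N. 1 - real N powr (1 - c)
      \<le> cprob N (a * ln (real N) / real N) (\<lambda>n. N - m N \<le> n 0)) sequentially"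
    using eventually_ge_at_top[of 2]
  proof eventually_elim
    case (elim N)
    define b where "b = a * ln (real N) / real N"
    have "real N * exp (- b * real (m N)) = real N * real N powr (- (a * real (m N) / real N))"
      unfolding b_def using exp_scaled_log[of N a "real (m N)"] elim(2) by simp
    also have "\<dots> \<le> real N * real N powr (- c)"
      using elim by (intro mult_left_mono powr_mono) auto
    also have "\<dots> = real N powr (1 - c)"
      using elim(2) by (simp add: powr_diff powr_minus divide_inverse)
    finally show ?case
      using cprob_excited_le_ge[of b "m N" N] a elim(2) m unfolding b_def by fastforce
  qed
  have upper: "eventually (\<lambda>N.
      cprob N (a * ln (real N) / real N) (\<lambda>n. N - m N \<le> n 0) \<le> 1) sequentially"
    using eventually_ge_at_top[of 2] by eventually_elim (use a cprob_le_1 in auto)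
  have "(\<lambda>N::nat. 1 - real N powr (1 - c)) \<longlonglongrightarrow> 1"
    using c(1) by real_asymp
  then show ?thesis
    by (rule tendsto_sandwich[OF lower upper _ tendsto_const])
qed

lemma liminf_mean_n0_fraction_ge:
  assumes a: "a > 0" and m: "\<forall>N. m N \<le> N"
    and lim: "(\<lambda>N. real (m N) / real N) \<longlonglongrightarrow> \<mu>" and a\<mu>: "a * \<mu> > 1"
  shows "ereal (1 - \<mu>) \<le> liminf (\<lambda>N. ereal (mean_n0 N (a * ln (real N) / real N) / real N))"
proof -
  define f where "f N = (1 - real (m N) / real N)
    * cprob N (a * ln (real N) / real N) (\<lambda>n. N - m N \<le> n 0)" for N
  have "f \<longlonglongrightarrow> (1 - \<mu>) * 1"
    unfolding f_def using lim tendsto_cprob_excited_le[OF assms] by (intro tendsto_intros)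
  then have "liminf (\<lambda>N. ereal (f N)) = ereal (1 - \<mu>)"
    by (intro lim_imp_Liminf) (auto simp: tendsto_ereal)
  moreover have "eventually (\<lambda>N. ereal (f N)
      \<le> ereal (mean_n0 N (a * ln (real N) / real N) / real N)) sequentially"
    using eventually_ge_at_top[of 2]
  proof eventually_elim
    case (elim N)
    have "1 - real (m N) / real N = real (N - m N) / real N"
      using elim m by (simp add: of_nat_diff field_simps)
    moreover have "a * ln (real N) / real N > 0"
      using a elim by simp
    ultimately show ?case
      using mean_n0_ge[OF _ m[rule_format]] elim
      by (simp add: f_def divide_right_mono)
  qed
  then have "liminf (\<lambda>N. ereal (f N))
      \<le> liminf (\<lambda>N. ereal (mean_n0 N (a * ln (real N) / real N) / real N))"
    by (rule Liminf_mono)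
  ultimately show ?thesis
    by simp
qed

lemma one_minus_pow_le_exp:
  assumes "0 \<le> x" "x \<le> 1"
  shows "(1 - x) ^ k \<le> exp (- (real k * x))"
proof -
  have "(1 - x) ^ k \<le> exp (- x) ^ k"
    using assms exp_ge_add_one_self[of "- x"] by (intro power_mono) auto
  then show ?thesis
    by (simp add: exp_of_nat_mult[symmetric])
qed

lemma real_nat_ceiling_le:
  assumes "0 \<le> x"
  shows "real (nat \<lceil>x\<rceil>) \<le> x + 1"
proof -
  have "- 1 < x"
    using assms by simp
  then have "real (nat \<lceil>x\<rceil>) = of_int \<lceil>x\<rceil>"
    by (intro of_nat_nat) (simp only: zero_le_ceiling)
  then show ?thesis
    using of_int_ceiling_le_add_one[of x] by linarith
qed

text \<open>Take \<open>k = \<lceil>N\<^sup>e\<rceil>\<close>: at most \<open>k\<close> excited particles has probability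
  \<open>\<le> (1 - N\<^sup>-\<^sup>a)\<^sup>k \<le> exp (- N\<^sup>e\<^sup>-\<^sup>a)\<close>, and otherwise \<open>n 0 < N - k\<close>.\<close>

lemma mean_n0_fraction_le:
  assumes a: "a > 0" and e: "0 \<le> e" "e \<le> 1" and N: "N \<ge> 2"
  shows "mean_n0 N (a * ln (real N) / real N) / real N
    \<le> exp (- (real N powr (e - a))) + (real N powr e + 1) / real N"
proof -
  define b where "b = a * ln (real N) / real N"
  define k where "k = nat \<lceil>real N powr e\<rceil>"
  have b: "b > 0"
    unfolding b_def using a N by simp
  have N_pos: "real N > 0"
    using N by simp
  have "real N powr e \<le> real N powr 1"
    using N e by (intro powr_mono) auto
  then have kN: "k \<le> N"
    unfolding k_def using N_pos by (simp add: nat_le_iff ceiling_le_iff)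
  have k_ge: "real N powr e \<le> real k" and k_le: "real k \<le> real N powr e + 1"
    unfolding k_def by (rule real_nat_ceiling_ge, rule real_nat_ceiling_le) simp
  define p where "p = cprob N b (\<lambda>n. N - (N - k) \<le> n 0)"
  have "exp (- b * real N) = real N powr (- a)"
    unfolding b_def using exp_scaled_log[of N a "real N"] N by simp
  then have "p \<le> (1 - real N powr (- a)) ^ k"
    using cprob_excited_le_le[OF b, of "N - k" N] kN unfolding p_def by simp
  also have "\<dots> \<le> exp (- (real k * real N powr (- a)))"
    using ge_one_powr_ge_zero[of "real N" a] N a
    by (intro one_minus_pow_le_exp) (auto simp: powr_minus_divide)
  also have "\<dots> \<le> exp (- (real N powr (e - a)))"
    using k_ge N_pos by (simp add: powr_diff powr_minus_divide divide_right_mono)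
  finally have p: "p \<le> exp (- (real N powr (e - a)))" .
  have "mean_n0 N b \<le> real k + real (N - k) * p"
    using mean_n0_le[OF b, of "N - k" N] kN unfolding p_def by simp
  also have "\<dots> \<le> real k + real N * p"
    using cprob_nonneg by (intro add_left_mono mult_right_mono) (auto simp: p_def)
  finally have "mean_n0 N b / real N \<le> p + real k / real N"
    using N_pos by (simp add: field_simps)
  also have "\<dots> \<le> exp (- (real N powr (e - a))) + (real N powr e + 1) / real N"
    using p k_le N_pos by (intro add_mono divide_right_mono) auto
  finally show ?thesis
    unfolding b_def .
qed

lemma tendsto_mean_n0_fraction_subcritical:
  assumes "0 < a" "a < 1"
  shows "(\<lambda>N. mean_n0 N (a * ln (real N) / real N) / real N) \<longlonglongrightarrow> 0"
proof -
  define e where "e = (1 + a) / 2"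
  have e: "a < e" "e < 1" "0 < e"
    using assms unfolding e_def by auto
  have lim: "(\<lambda>N::nat. exp (- (real N powr (e - a))) + (real N powr e + 1) / real N) \<longlonglongrightarrow> 0"
    using e by real_asymp
  have upper: "eventually (\<lambda>N. mean_n0 N (a * ln (real N) / real N) / real N
      \<le> exp (- (real N powr (e - a))) + (real N powr e + 1) / real N) sequentially"
    using eventually_ge_at_top[of 2]
    by eventually_elim (intro mean_n0_fraction_le, use assms e in auto)
  show ?thesis
    by (rule tendsto_sandwich[OF _ upper tendsto_const lim])
       (auto intro!: always_eventually simp: mean_n0_nonneg)
qed

lemma liminf_mean_n0_fraction_supercritical:
  assumes a: "a > 1"
  shows "ereal (1 - 1 / a) \<le> liminf (\<lambda>N. ereal (mean_n0 N (a * ln (real N) / real N) / real N))"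
proof (rule dense_le_bounded[of "ereal 0"])
  show "ereal 0 < ereal (1 - 1 / a)"
    using a by simp
  fix w
  assume w: "ereal 0 < w" "w < ereal (1 - 1 / a)"
  then obtain L where L: "w = ereal L" "0 < L" "L < 1 - 1 / a"
    by (cases w) auto
  define \<mu> where "\<mu> = 1 - L"
  have \<mu>: "0 < \<mu>" "\<mu> \<le> 1" "a * \<mu> > 1"
    using L a less_trans[OF L(3), of 1] unfolding \<mu>_def by (auto simp: field_simps)
  define m where "m N = nat \<lfloor>\<mu> * real N\<rfloor>" for N
  have "\<mu> * real N < real N + 1" for N
    using \<mu> mult_left_le_one_le[of "real N" \<mu>] by auto
  then have "\<forall>N. m N \<le> N"
    unfolding m_def by (simp add: nat_le_iff floor_le_iff)
  moreover have "(\<lambda>N. real (m N) / real N) \<longlonglongrightarrow> \<mu>"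
    unfolding m_def using \<mu>(1) by real_asymp
  ultimately have
    "ereal (1 - \<mu>) \<le> liminf (\<lambda>N. ereal (mean_n0 N (a * ln (real N) / real N) / real N))"
    using a \<mu>(3) by (intro liminf_mean_n0_fraction_ge) auto
  then show "w \<le> liminf (\<lambda>N. ereal (mean_n0 N (a * ln (real N) / real N) / real N))"
    unfolding L(1) \<mu>_def by simp
qed

lemma cprob_fraction_ge_eq:
  assumes "N > 0" "m \<le> N"
  shows "cprob N b (\<lambda>n. 1 - real m / real N \<le> real (n 0) / real N) = cprob N b (\<lambda>n. N - m \<le> n 0)"
proof -
  have "1 - real m / real N = real (N - m) / real N"
    using assms by (simp add: of_nat_diff field_simps)
  then have "1 - real m / real N \<le> real k / real N \<longleftrightarrow> N - m \<le> k" for k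
    using assms by (simp add: divide_le_cancel del: of_nat_diff)
  then show ?thesis
    unfolding cprob_def by simp
qed

theorem corollary2:
  fixes a :: real
  assumes "a > 0"
  defines "aN \<equiv> (\<lambda>N::nat. a * ln (real N) / real N)"
  shows "(a < 1 \<longrightarrow> ((\<lambda>N. mean_n0 N (aN N) / real N) \<longlonglongrightarrow> 0))
       \<and> (a > 1 \<longrightarrow>
            (\<forall>(m :: nat \<Rightarrow> nat) (L :: real).
               (\<forall>N. m N \<le> N) \<longrightarrow>
               ((\<lambda>N. 1 - real (m N) / real N) \<longlonglongrightarrow> L) \<longrightarrow>
               0 < L \<longrightarrow> L < 1 - 1 / a \<longrightarrow>
               ((\<lambda>N. cprob N (aN N)
                   (\<lambda>n. real (n 0) / real N \<ge> 1 - real (m N) / real N)) \<longlonglongrightarrow> 1))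
          \<and> liminf (\<lambda>N. ereal (mean_n0 N (aN N) / real N)) \<ge> ereal (1 - 1 / a))"
proof -
  have "(\<lambda>N. cprob N (aN N) (\<lambda>n. real (n 0) / real N \<ge> 1 - real (m N) / real N)) \<longlonglongrightarrow> 1"
    if a: "a > 1" and m: "\<forall>N. m N \<le> N" and lim: "(\<lambda>N. 1 - real (m N) / real N) \<longlonglongrightarrow> L"
      and L: "L < 1 - 1 / a" for m L
  proof -
    have "(\<lambda>N. real (m N) / real N) \<longlonglongrightarrow> 1 - L"
      using tendsto_diff[OF tendsto_const lim, of 1] by simp
    moreover have "a * (1 - L) > 1"
      using a L by (simp add: field_simps)
    ultimately have "(\<lambda>N. cprob N (aN N) (\<lambda>n. N - m N \<le> n 0)) \<longlonglongrightarrow> 1"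
      unfolding aN_def using assms m by (intro tendsto_cprob_excited_le) auto
    moreover have "eventually (\<lambda>N. cprob N (aN N) (\<lambda>n. N - m N \<le> n 0)
        = cprob N (aN N) (\<lambda>n. real (n 0) / real N \<ge> 1 - real (m N) / real N)) sequentially"
      using eventually_gt_at_top[of 0] by eventually_elim (use cprob_fraction_ge_eq m in auto)
    ultimately show ?thesis
      by (rule Lim_transform_eventually)
  qed
  then show ?thesis
    unfolding aN_def
    using tendsto_mean_n0_fraction_subcritical[OF assms(1)] liminf_mean_n0_fraction_supercritical
    by auto
qed

end
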